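(* Let $A\in\mathbb{C}^{m\times n}$. Then the following are equivalent: (1) $A^{\mathfrak{m}}$ exists; (2) $\mathrm{rank}(AA^{\sim})=\mathrm{rank}(A^{\sim}A)=\mathrm{rank}(A)$; (3) $\mathrm{rank}(A^{\sim}AA^{\sim})=\mathrm{rank}(A)$; (4) $A\mathcal{R}(A^{\sim})\oplus\mathcal{N}(A^{\sim})=\mathbb{C}^m$.
   Context: For a positive integer $k$, the Minkowski metric matrix of order $k$ is $G_k=\mathrm{diag}(1,-I_{k-1})$ (with $G_1=(1)$). For $A\in\mathbb{C}^{m\times n}$, the Minkowski adjoint is $A^{\sim}=G_nA^*G_m$, where $A^*$ is the conjugate transpose. The Minkowski inverse of $A$, denoted $A^{\mathfrak{m}}$, is a matrix $X\in\mathbb{C}^{n\times m}$ with $AXA=A$, $XAX=X$, $(AX)^{\sim}=AX$, $(XA)^{\sim}=XA$ (unique if it exists). $\mathcal{R}(\cdot)$, $\mathcal{N}(\cdot)$ denote range and null space, and $A\mathcal{R}(A^{\sim})=\{Av: v\in\mathcal{R}(A^{\sim})\}$. *)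

theory Defs
  imports "Jordan_Normal_Form.Schur_Decomposition" "Jordan_Normal_Form.DL_Rank"
    "Jordan_Normal_Form.Matrix_Kernel"
begin

definition minkowski_G :: "nat \<Rightarrow> complex mat" where
  "minkowski_G k = mat k k (\<lambda>(i,j). if i = j then (if i = 0 then 1 else -1) else 0)"

definition mink_adj :: "complex mat \<Rightarrow> complex mat" where
  "mink_adj A = minkowski_G (dim_col A) * mat_adjoint A * minkowski_G (dim_row A)"

definition is_minkowski_inverse :: "complex mat \<Rightarrow> complex mat \<Rightarrow> bool" where
  "is_minkowski_inverse A X \<longleftrightarrow>
     X \<in> carrier_mat (dim_col A) (dim_row A) \<and>
     A * X * A = A \<and> X * A * X = X \<and>
     mink_adj (A * X) = A * X \<and> mink_adj (X * A) = X * A"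

definition crank :: "complex mat \<Rightarrow> nat" where
  "crank A = vec_space.rank (dim_row A) A"

definition mat_range :: "complex mat \<Rightarrow> complex vec set" where
  "mat_range A = {A *\<^sub>v x | x. x \<in> carrier_vec (dim_col A)}"

definition mat_image :: "complex mat \<Rightarrow> complex vec set \<Rightarrow> complex vec set" where
  "mat_image A S = {A *\<^sub>v v | v. v \<in> S}"

definition direct_sum_full :: "nat \<Rightarrow> complex vec set \<Rightarrow> complex vec set \<Rightarrow> bool" where
  "direct_sum_full m U W \<longleftrightarrow>
     U \<subseteq> carrier_vec m \<and> W \<subseteq> carrier_vec m \<and>
     U \<inter> W = {0\<^sub>v m} \<and>
     {u + w | u w. u \<in> U \<and> w \<in> W} = carrier_vec m"

end

theory Submission
  imports Defs
begin

(* Write A~ for the Minkowski adjoint. Since G_k is a real diagonal involution, A~ is an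
   involutive anti-automorphism of matrix multiplication, and it preserves rank because
   N(M^* M) = N(M). So the argument for Moore-Penrose inverses in a ring with involution
   goes through:
   - if A = A A~ P and A = Q A~ A, then X = P~ A Q~ is the Minkowski inverse of A;
   - such P and Q exist iff rank (A A~) = rank A = rank (A~ A), as rank (M N) = rank M
     forces M = M N P;
   - conversely, a Minkowski inverse X gives A = A A~ X~ = X~ A~ A = X~ (A~ A A~) X~,
     whence the rank conditions, and A X is the projection onto A R(A~) = R(A A~)
     along N(A~);
   - finally C^m = A R(A~) + N(A~) gives R(A~) = R(A~ A A~), hence
     rank (A~ A A~) = rank A~ = rank A. *)

section \<open>Rank of matrix products\<close>

lemma rank_nullity_mat:
  fixes M :: "'a::field mat"
  assumes M: "M \<in> carrier_mat nr nc"
  shows "vec_space.rank nr M + kernel_dim M = nc"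
proof -
  interpret V: vec_space "TYPE('a)" nc .
  interpret W: vec_space "TYPE('a)" nr .
  interpret L: linear_map class_ring "module_vec TYPE('a) nc" "module_vec TYPE('a) nr" "\<lambda>v. M *\<^sub>v v"
    apply intro_locales
    unfolding mod_hom_axioms_def LinearCombinations.module_hom_def
    using M by (auto simp: module_vec_def mult_add_distrib_mat_vec mult_mat_vec)
  interpret K: kernel nr nc M using M by unfold_locales
  have "vectorspace.dim class_ring (W.vs L.imT) + vectorspace.dim class_ring (V.vs L.kerT) = V.dim"
    by (rule L.rank_nullity) simp
  moreover have "L.imT = W.span (set (cols M))"
    using W.col_space_eq[OF M] M unfolding L.im_def W.col_space_def by auto
  moreover have "L.kerT = mat_kernel M"
    using M unfolding L.ker_def mat_kernel_def by (auto simp: module_vec_def)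
  ultimately show ?thesis unfolding V.dim_is_n W.rank_def K.kernel_dim by simp
qed

context vec_space
begin

lemma subspace_lin_indpt_iff:
  assumes "VectorSpace.subspace class_ring W V" and "S \<subseteq> W"
  shows "module.lin_indpt class_ring (vs W) S \<longleftrightarrow> lin_indpt S"
  using span_li_not_depend(2)[OF assms(2)] assms(1) unfolding subspace_def by auto

lemma subspace_span_eq:
  assumes "VectorSpace.subspace class_ring W V" and "S \<subseteq> W"
  shows "LinearCombinations.module.span class_ring (vs W) S = span S"
  using span_li_not_depend(1)[OF assms(2)] assms(1) unfolding subspace_def by auto

lemma subspace_fin_dim:
  assumes W: "VectorSpace.subspace class_ring W V"
  shows "vectorspace.fin_dim class_ring (vs W)"
proof -
  interpret VW: vectorspace class_ring "vs W" using subspace_is_vs[OF W] .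
  have WV: "W \<subseteq> carrier V"
    using W by (simp add: VectorSpace.subspace_def submodule_def)
  let ?P = "\<lambda>S. S \<subseteq> carrier (vs W) \<and> VW.lin_indpt S"
  have bounded: "finite S \<and> card S \<le> n" if "?P S" for S
  proof -
    have "lin_indpt S" "S \<subseteq> carrier V" using that subspace_lin_indpt_iff[OF W] WV by auto
    thus ?thesis using li_le_dim[OF fin_dim] dim_is_n by auto
  qed
  have "?P {}" using VW.span_empty by (auto simp: VW.lin_dep_def)
  then obtain S where "finite S" "maximal S ?P" using maximal_exists[of ?P] bounded by blast
  thus ?thesis using VW.max_li_is_basis unfolding VW.fin_dim_def VW.basis_def by blast
qed

lemma subspace_dim_le:
  assumes W1: "VectorSpace.subspace class_ring W1 V" and W2: "VectorSpace.subspace class_ring W2 V"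
    and "W1 \<subseteq> W2"
  shows "vectorspace.dim class_ring (vs W1) \<le> vectorspace.dim class_ring (vs W2)"
proof -
  interpret V2: vectorspace class_ring "vs W2" using subspace_is_vs[OF W2] .
  have "VectorSpace.subspace class_ring W1 (vs W2)" by (rule nested_subspaces[OF W2 W1 assms(3)])
  thus ?thesis using V2.subspace_dim subspace_fin_dim[OF W1] subspace_fin_dim[OF W2] by simp
qed

lemma subspace_eq_of_dim_le:
  assumes W1: "VectorSpace.subspace class_ring W1 V" and W2: "VectorSpace.subspace class_ring W2 V"
    and sub: "W1 \<subseteq> W2"
    and dim: "vectorspace.dim class_ring (vs W2) \<le> vectorspace.dim class_ring (vs W1)"
  shows "W1 = W2"
proof -
  interpret V1: vectorspace class_ring "vs W1" using subspace_is_vs[OF W1] .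
  interpret V2: vectorspace class_ring "vs W2" using subspace_is_vs[OF W2] .
  obtain b where b: "finite b" "V1.basis b"
    using V1.finite_basis_exists[OF subspace_fin_dim[OF W1]] by blast
  have bW1: "b \<subseteq> W1" using b unfolding V1.basis_def by auto
  have "V2.basis b"
  proof (rule V2.dim_li_is_basis[OF subspace_fin_dim[OF W2] b(1)])
    show "V2.lin_indpt b" "b \<subseteq> carrier (vs W2)"
      using b bW1 sub subspace_lin_indpt_iff[OF W1] subspace_lin_indpt_iff[OF W2]
      unfolding V1.basis_def by auto
    show "V2.dim \<le> card b" using dim V1.dim_basis[OF b] by simp
  qed
  hence "span b = W2" using subspace_span_eq[OF W2] bW1 sub unfolding V2.basis_def by auto
  moreover have "span b = W1" using b subspace_span_eq[OF W1 bW1] unfolding V1.basis_def by auto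
  ultimately show ?thesis by simp
qed

lemma col_space_subspace:
  assumes "A \<in> carrier_mat n nc"
  shows "VectorSpace.subspace class_ring (col_space A) V"
  unfolding col_space_def using assms by (intro span_is_subspace) (auto simp: cols_def)

lemma rank_eq_dim_col_space: "rank A = vectorspace.dim class_ring (vs (col_space A))"
  by (simp add: rank_def col_space_def)

lemma rank_le_of_col_space_subset:
  assumes "A \<in> carrier_mat n k" and "C \<in> carrier_mat n k'" and "col_space A \<subseteq> col_space C"
  shows "rank A \<le> rank C"
  unfolding rank_eq_dim_col_space using assms by (intro subspace_dim_le col_space_subspace)

lemma col_space_mult_subset:
  assumes A: "A \<in> carrier_mat n k" and B: "B \<in> carrier_mat k nc"
  shows "col_space (A * B) \<subseteq> col_space A"
proof
  fix y assume "y \<in> col_space (A * B)"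
  then obtain x where x: "x \<in> carrier_vec nc" and y: "y = A *\<^sub>v (B *\<^sub>v x)" "y \<in> carrier_vec n"
    unfolding col_space_eq[OF mult_carrier_mat[OF A B]] using A B by auto
  moreover have "B *\<^sub>v x \<in> carrier_vec k" using B x by simp
  ultimately show "y \<in> col_space A" unfolding col_space_eq[OF A] using A by auto
qed

lemma rank_mult_left_le:
  assumes "A \<in> carrier_mat n k" and "B \<in> carrier_mat k nc"
  shows "rank (A * B) \<le> rank A"
  using assms by (intro rank_le_of_col_space_subset col_space_mult_subset) auto

lemma factor_of_col_space_subset:
  assumes A: "A \<in> carrier_mat n k" and C: "C \<in> carrier_mat n c"
    and sub: "col_space A \<subseteq> col_space C"
  shows "\<exists>P \<in> carrier_mat c k. A = C * P"
proof -
  have "\<forall>j \<in> {..<k}. \<exists>x. x \<in> carrier_vec c \<and> C *\<^sub>v x = col A j"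
  proof
    fix j assume "j \<in> {..<k}"
    hence "col A j \<in> set (cols A)" using A by (simp add: cols_def)
    moreover have "set (cols A) \<subseteq> carrier_vec n" using A by (auto simp: cols_def)
    ultimately have "col A j \<in> col_space C"
      using in_own_span sub unfolding col_space_def by blast
    hence "col A j \<in> {y \<in> carrier_vec (dim_row C). \<exists>x \<in> carrier_vec (dim_col C). C *\<^sub>v x = y}"
      by (simp only: col_space_eq[OF C])
    thus "\<exists>x. x \<in> carrier_vec c \<and> C *\<^sub>v x = col A j" using C by auto
  qed
  from bchoice[OF this] obtain x
    where x: "\<forall>j \<in> {..<k}. x j \<in> carrier_vec c \<and> C *\<^sub>v x j = col A j" ..
  define P where "P = mat_of_cols c (map x [0..<k])"
  have P: "P \<in> carrier_mat c k"
    unfolding P_def using mat_of_cols_carrier(1)[of c "map x [0..<k]"] by simp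
  have "C * P = A"
  proof (rule mat_col_eqI)
    fix j assume "j < dim_col A"
    hence j: "j < k" using A by simp
    hence xj: "x j \<in> carrier_vec c" "C *\<^sub>v x j = col A j" using x by simp_all
    hence "col P j = x j" unfolding P_def using j by simp
    thus "col (C * P) j = col A j" using col_mult2[OF C P j] xj by simp
  qed (use A C P in simp_all)
  thus ?thesis using P by auto
qed

lemma rank_mult_factor:
  assumes A: "A \<in> carrier_mat n k" and B: "B \<in> carrier_mat k nc"
    and rank: "rank A \<le> rank (A * B)"
  shows "\<exists>P \<in> carrier_mat nc k. A = A * B * P"
proof -
  have AB: "A * B \<in> carrier_mat n nc" using A B by simp
  have "col_space (A * B) = col_space A"
    using rank col_space_mult_subset[OF A B]
    by (intro subspace_eq_of_dim_le col_space_subspace[OF AB] col_space_subspace[OF A])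
      (simp_all add: rank_eq_dim_col_space)
  thus ?thesis using factor_of_col_space_subset[OF A AB] by simp
qed

end

lemma mat_kernel_subspace:
  fixes M :: "'a::field mat"
  assumes M: "M \<in> carrier_mat nr nc"
  shows "VectorSpace.subspace class_ring (mat_kernel M) (module_vec TYPE('a) nc)"
proof -
  interpret V: vec_space "TYPE('a)" nc .
  show ?thesis
  proof (intro subspace.intro V.vectorspace_axioms submodule.intro V.module_axioms)
    show "mat_kernel M \<subseteq> carrier (module_vec TYPE('a) nc)"
      using mat_kernel_carrier[OF M] by simp
    show "\<zero>\<^bsub>module_vec TYPE('a) nc\<^esub> \<in> mat_kernel M"
      using M by (auto simp: mat_kernel_def module_vec_def)
    fix v w assume "v \<in> mat_kernel M" "w \<in> mat_kernel M"
    thus "v \<oplus>\<^bsub>module_vec TYPE('a) nc\<^esub> w \<in> mat_kernel M"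
      using M by (auto simp: mat_kernel_def module_vec_def mult_add_distrib_mat_vec)
  next
    fix c :: 'a and v assume "v \<in> mat_kernel M"
    thus "c \<odot>\<^bsub>module_vec TYPE('a) nc\<^esub> v \<in> mat_kernel M"
      using M by (auto simp: mat_kernel_def module_vec_def mult_mat_vec)
  qed
qed

lemma kernel_dim_le_of_subset:
  fixes M N :: "'a::field mat"
  assumes M: "M \<in> carrier_mat nr nc" and N: "N \<in> carrier_mat nr' nc"
    and "mat_kernel M \<subseteq> mat_kernel N"
  shows "kernel_dim M \<le> kernel_dim N"
proof -
  interpret V: vec_space "TYPE('a)" nc .
  interpret KM: kernel nr nc M using M by unfold_locales
  interpret KN: kernel nr' nc N using N by unfold_locales
  show ?thesis
    using V.subspace_dim_le[OF mat_kernel_subspace[OF M] mat_kernel_subspace[OF N] assms(3)] by simp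
qed

lemma rank_mult_right_le:
  fixes A B :: "'a::field mat"
  assumes A: "A \<in> carrier_mat n k" and B: "B \<in> carrier_mat k nc"
  shows "vec_space.rank n (A * B) \<le> vec_space.rank k B"
proof -
  have AB: "A * B \<in> carrier_mat n nc" using A B by simp
  have "kernel_dim B \<le> kernel_dim (A * B)"
    by (rule kernel_dim_le_of_subset[OF B AB mat_kernel_mult_subset[OF B A]])
  thus ?thesis using rank_nullity_mat[OF AB] rank_nullity_mat[OF B] by linarith
qed

section \<open>Rank of the conjugate transpose\<close>

lemma index_mat_adjoint [simp]:
  "i < dim_col A \<Longrightarrow> j < dim_row A \<Longrightarrow> mat_adjoint (A :: complex mat) $$ (i,j) = cnj (A $$ (j,i))"
  "dim_row (mat_adjoint A) = dim_col A" "dim_col (mat_adjoint A) = dim_row A"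
  by (simp_all add: mat_adjoint_def mat_of_rows_index)

lemma mat_adjoint_carrier [simp]: "A \<in> carrier_mat m n \<Longrightarrow> mat_adjoint (A :: complex mat) \<in> carrier_mat n m"
  by (intro carrier_matI) (simp_all add: carrier_matD)

lemma mat_adjoint_mat_adjoint [simp]: "mat_adjoint (mat_adjoint (A :: complex mat)) = A"
  by (rule eq_matI) simp_all

lemma cscalar_prod_mat_adjoint:
  fixes M :: "complex mat"
  assumes M: "M \<in> carrier_mat m n" and v: "v \<in> carrier_vec n" and w: "w \<in> carrier_vec m"
  shows "(M *\<^sub>v v) \<bullet>c w = v \<bullet>c (mat_adjoint M *\<^sub>v w)"
proof -
  have "(M *\<^sub>v v) \<bullet>c w = (\<Sum>i<m. \<Sum>j<n. M $$ (i,j) * v $ j * cnj (w $ i))"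
    using M v w by (simp add: scalar_prod_def lessThan_atLeast0 sum_distrib_right)
  also have "\<dots> = (\<Sum>j<n. \<Sum>i<m. v $ j * cnj (cnj (M $$ (i,j)) * w $ i))"
    by (subst sum.swap) (simp add: ac_simps)
  also have "\<dots> = v \<bullet>c (mat_adjoint M *\<^sub>v w)"
    using M v w by (simp add: scalar_prod_def lessThan_atLeast0 sum_distrib_left)
  finally show ?thesis .
qed

lemma mat_kernel_adjoint_mult:
  fixes M :: "complex mat"
  assumes M: "M \<in> carrier_mat m n"
  shows "mat_kernel (mat_adjoint M * M) = mat_kernel M"
proof
  show "mat_kernel M \<subseteq> mat_kernel (mat_adjoint M * M)"
    by (rule mat_kernel_mult_subset[OF M mat_adjoint_carrier[OF M]])
  show "mat_kernel (mat_adjoint M * M) \<subseteq> mat_kernel M"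
  proof
    have M': "mat_adjoint M \<in> carrier_mat n m" by (rule mat_adjoint_carrier[OF M])
    have MM: "mat_adjoint M * M \<in> carrier_mat n n" using M' M by (rule mult_carrier_mat)
    fix v assume "v \<in> mat_kernel (mat_adjoint M * M)"
    from mat_kernelD[OF MM this]
    have v: "v \<in> carrier_vec n" and "mat_adjoint M *\<^sub>v (M *\<^sub>v v) = 0\<^sub>v n"
      using assoc_mult_mat_vec[OF M' M] by simp_all
    hence "(M *\<^sub>v v) \<bullet>c (M *\<^sub>v v) = 0"
      using cscalar_prod_mat_adjoint[OF M v] M by simp
    moreover have "M *\<^sub>v v \<in> carrier_vec m" using M v by (rule mult_mat_vec_carrier)
    ultimately have "M *\<^sub>v v = 0\<^sub>v m" by simp
    thus "v \<in> mat_kernel M" using M v by (intro mat_kernelI)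
  qed
qed

lemma crank_mult_left_le:
  assumes A: "A \<in> carrier_mat m k" and B: "B \<in> carrier_mat k n"
  shows "crank (A * B) \<le> crank A"
  using vec_space.rank_mult_left_le[OF A B] carrier_matD[OF A] by (simp add: crank_def)

lemma crank_mult_right_le:
  assumes A: "A \<in> carrier_mat m k" and B: "B \<in> carrier_mat k n"
  shows "crank (A * B) \<le> crank B"
  using rank_mult_right_le[OF A B] carrier_matD[OF A] carrier_matD[OF B] by (simp add: crank_def)

lemma crank_mult_factor:
  assumes A: "A \<in> carrier_mat m k" and B: "B \<in> carrier_mat k n"
    and "crank A \<le> crank (A * B)"
  shows "\<exists>P \<in> carrier_mat n k. A = A * B * P"
  using vec_space.rank_mult_factor[OF A B] assms(3) carrier_matD[OF A] by (simp add: crank_def)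

lemma crank_le_mat_adjoint: "crank M \<le> crank (mat_adjoint M)"
proof -
  have M: "M \<in> carrier_mat (dim_row M) (dim_col M)" by simp
  have M': "mat_adjoint M \<in> carrier_mat (dim_col M) (dim_row M)" by (rule mat_adjoint_carrier[OF M])
  have MM: "mat_adjoint M * M \<in> carrier_mat (dim_col M) (dim_col M)"
    using M' M by (rule mult_carrier_mat)
  have "kernel_dim (mat_adjoint M * M) = kernel_dim M"
    unfolding kernel_dim_def mat_kernel_adjoint_mult[OF M] by simp
  hence "crank M = vec_space.rank (dim_col M) (mat_adjoint M * M)"
    using rank_nullity_mat[OF M] rank_nullity_mat[OF MM] unfolding crank_def by linarith
  also have "\<dots> \<le> crank (mat_adjoint M)"
    using vec_space.rank_mult_left_le[OF M' M] unfolding crank_def by simp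
  finally show ?thesis .
qed

lemma crank_mat_adjoint [simp]: "crank (mat_adjoint M) = crank M"
  using crank_le_mat_adjoint[of M] crank_le_mat_adjoint[of "mat_adjoint M"] by simp

section \<open>The Minkowski adjoint\<close>

definition minkowski_sign :: "nat \<Rightarrow> complex" where
  "minkowski_sign i = (if i = 0 then 1 else -1)"

lemma minkowski_sign_sq_left [simp]: "minkowski_sign i * (minkowski_sign i * x) = x"
  by (simp add: minkowski_sign_def)

lemma cnj_minkowski_sign [simp]: "cnj (minkowski_sign i) = minkowski_sign i"
  by (simp add: minkowski_sign_def)

lemma minkowski_G_carrier [simp]: "minkowski_G k \<in> carrier_mat k k"
  by (simp add: minkowski_G_def)

lemma minkowski_G_dims [simp]: "dim_row (minkowski_G k) = k" "dim_col (minkowski_G k) = k"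
  by (simp_all add: minkowski_G_def)

lemma index_minkowski_G:
  "i < k \<Longrightarrow> j < k \<Longrightarrow> minkowski_G k $$ (i,j) = (if i = j then minkowski_sign i else 0)"
  by (simp add: minkowski_G_def minkowski_sign_def)

lemma index_minkowski_G_mult:
  assumes "dim_row M = k" "i < k" "j < dim_col M"
  shows "(minkowski_G k * M) $$ (i,j) = minkowski_sign i * M $$ (i,j)"
proof -
  have "(minkowski_G k * M) $$ (i,j) = (\<Sum>l\<in>{0..<k}. minkowski_G k $$ (i,l) * M $$ (l,j))"
    using assms by (simp add: scalar_prod_def)
  also have "\<dots> = (\<Sum>l\<in>{0..<k}. if l = i then minkowski_sign i * M $$ (i,j) else 0)"
    using assms by (intro sum.cong) (auto simp: index_minkowski_G)
  finally show ?thesis using assms by simp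
qed

lemma index_mult_minkowski_G:
  assumes "dim_col M = k" "i < dim_row M" "j < k"
  shows "(M * minkowski_G k) $$ (i,j) = M $$ (i,j) * minkowski_sign j"
proof -
  have "(M * minkowski_G k) $$ (i,j) = (\<Sum>l\<in>{0..<k}. M $$ (i,l) * minkowski_G k $$ (l,j))"
    using assms by (simp add: scalar_prod_def)
  also have "\<dots> = (\<Sum>l\<in>{0..<k}. if l = j then M $$ (i,j) * minkowski_sign j else 0)"
    using assms by (intro sum.cong) (auto simp: index_minkowski_G)
  finally show ?thesis using assms by simp
qed

lemma index_mink_adj:
  assumes "i < dim_col A" "j < dim_row A"
  shows "mink_adj A $$ (i,j) = minkowski_sign i * minkowski_sign j * cnj (A $$ (j,i))"
proof -
  have "mink_adj A $$ (i,j) =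
      (minkowski_G (dim_col A) * mat_adjoint A) $$ (i,j) * minkowski_sign j"
    unfolding mink_adj_def using assms by (intro index_mult_minkowski_G) simp_all
  also have "\<dots> = minkowski_sign i * cnj (A $$ (j,i)) * minkowski_sign j"
    using assms by (subst index_minkowski_G_mult) simp_all
  finally show ?thesis by (simp add: ac_simps)
qed

lemma mink_adj_dims [simp]:
  "dim_row (mink_adj A) = dim_col A" "dim_col (mink_adj A) = dim_row A"
  by (simp_all add: mink_adj_def)

lemma mink_adj_carrier [simp]: "A \<in> carrier_mat m n \<Longrightarrow> mink_adj A \<in> carrier_mat n m"
  by (intro carrier_matI) (simp_all add: carrier_matD)

lemma mink_adj_mink_adj [simp]: "mink_adj (mink_adj A) = A"
  by (rule eq_matI) (simp_all add: index_mink_adj minkowski_sign_def)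

lemma mink_adj_mult:
  assumes dims: "dim_col A = dim_row B"
  shows "mink_adj (A * B) = mink_adj B * mink_adj A"
proof (rule eq_matI)
  fix i j assume "i < dim_row (mink_adj B * mink_adj A)" "j < dim_col (mink_adj B * mink_adj A)"
  hence i: "i < dim_col B" and j: "j < dim_row A" by simp_all
  have "(mink_adj B * mink_adj A) $$ (i,j) =
      (\<Sum>l\<in>{0..<dim_col A}. mink_adj B $$ (i,l) * mink_adj A $$ (l,j))"
    using i j dims by (simp add: scalar_prod_def)
  also have "\<dots> = (\<Sum>l\<in>{0..<dim_col A}.
      minkowski_sign i * minkowski_sign j * cnj (A $$ (j,l) * B $$ (l,i)))"
    using i j dims by (intro sum.cong) (simp_all add: index_mink_adj ac_simps)
  also have "\<dots> = minkowski_sign i * minkowski_sign j * cnj ((A * B) $$ (j,i))"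
    using i j dims by (simp add: scalar_prod_def sum_distrib_left)
  also have "\<dots> = mink_adj (A * B) $$ (i,j)"
    using i j dims by (simp add: index_mink_adj)
  finally show "mink_adj (A * B) $$ (i,j) = (mink_adj B * mink_adj A) $$ (i,j)" ..
qed (use dims in simp_all)

lemma crank_mink_adj_le: "crank (mink_adj A) \<le> crank A"
proof -
  let ?G = minkowski_G and ?n = "dim_col A" and ?m = "dim_row A"
  have adj: "mat_adjoint A \<in> carrier_mat ?n ?m" by (rule mat_adjoint_carrier[OF carrier_mat_triv])
  have "crank (mink_adj A) \<le> crank (?G ?n * mat_adjoint A)"
    unfolding mink_adj_def
    by (rule crank_mult_left_le[OF mult_carrier_mat[OF minkowski_G_carrier adj] minkowski_G_carrier])
  also have "\<dots> \<le> crank (mat_adjoint A)"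
    by (rule crank_mult_right_le[OF minkowski_G_carrier adj])
  finally show ?thesis by simp
qed

lemma crank_mink_adj [simp]: "crank (mink_adj A) = crank A"
  using crank_mink_adj_le[of A] crank_mink_adj_le[of "mink_adj A"] by simp

section \<open>Range-kernel decompositions\<close>

lemma mult_mat_vec_zero:
  assumes "A \<in> carrier_mat nr nc"
  shows "A *\<^sub>v 0\<^sub>v nc = 0\<^sub>v nr"
  using carrier_matD[OF assms] by (intro eq_vecI) (simp_all add: scalar_prod_def)

lemma mat_image_mat_range_mult:
  assumes "dim_col A = dim_row B"
  shows "mat_image A (mat_range B) = mat_range (A * B)"
proof -
  have B: "B \<in> carrier_mat (dim_col A) (dim_col B)" using assms by (auto intro!: carrier_matI)
  have "mat_image A (mat_range B) = (\<lambda>x. A *\<^sub>v (B *\<^sub>v x)) ` carrier_vec (dim_col B)"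
    unfolding mat_image_def mat_range_def by auto
  also have "\<dots> = (\<lambda>x. (A * B) *\<^sub>v x) ` carrier_vec (dim_col B)"
    using assoc_mult_mat_vec[OF carrier_mat_triv B] by (intro image_cong) simp_all
  also have "\<dots> = mat_range (A * B)" unfolding mat_range_def by auto
  finally show ?thesis .
qed

(* M S is the projection onto R(M) along N(N). *)
lemma direct_sum_full_range_kernel:
  assumes M: "M \<in> carrier_mat m k" and S: "S \<in> carrier_mat k m"
    and N: "N \<in> carrier_mat l m" and T: "T \<in> carrier_mat m l"
    and MSM: "M * S * M = M" and NMS: "N * M * S = N" and proj: "M * S = T * N"
  shows "direct_sum_full m (mat_range M) (mat_kernel N)"
proof -
  have MS: "M * S \<in> carrier_mat m m" using M S by (rule mult_carrier_mat)
  have range_M: "M *\<^sub>v x \<in> mat_range M" if "x \<in> carrier_vec k" for x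
    using that carrier_matD[OF M] unfolding mat_range_def by blast
  have range: "mat_range M \<subseteq> carrier_vec m"
    using mult_mat_vec_carrier[OF M] carrier_matD[OF M] unfolding mat_range_def by blast
  have kernel: "mat_kernel N \<subseteq> carrier_vec m" using N by (rule mat_kernel_carrier)
  have trivial: "v = 0\<^sub>v m" if "v \<in> mat_range M" and v: "v \<in> mat_kernel N" for v
  proof -
    obtain y where y: "y \<in> carrier_vec k" "v = M *\<^sub>v y"
      using \<open>v \<in> mat_range M\<close> carrier_matD[OF M] unfolding mat_range_def by blast
    from mat_kernelD[OF N v] have vc: "v \<in> carrier_vec m" and Nv: "N *\<^sub>v v = 0\<^sub>v l" .
    have "v = (M * S * M) *\<^sub>v y" by (simp only: MSM y(2))
    also have "\<dots> = (M * S) *\<^sub>v v" unfolding y(2) by (rule assoc_mult_mat_vec[OF MS M y(1)])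
    also have "\<dots> = T *\<^sub>v (N *\<^sub>v v)" unfolding proj by (rule assoc_mult_mat_vec[OF T N vc])
    also have "\<dots> = 0\<^sub>v m" unfolding Nv by (rule mult_mat_vec_zero[OF T])
    finally show ?thesis .
  qed
  have decomposition: "v \<in> {u + w |u w. u \<in> mat_range M \<and> w \<in> mat_kernel N}"
    if v: "v \<in> carrier_vec m" for v
  proof -
    define u where "u = (M * S) *\<^sub>v v"
    have Sv: "S *\<^sub>v v \<in> carrier_vec k" using S v by (rule mult_mat_vec_carrier)
    have u: "u \<in> carrier_vec m" unfolding u_def using MS v by (rule mult_mat_vec_carrier)
    have "u = M *\<^sub>v (S *\<^sub>v v)" unfolding u_def by (rule assoc_mult_mat_vec[OF M S v])
    hence "u \<in> mat_range M" using range_M[OF Sv] by simp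
    moreover have "N *\<^sub>v (v - u) = 0\<^sub>v l"
    proof -
      have "N *\<^sub>v u = (N * (M * S)) *\<^sub>v v"
        unfolding u_def by (rule assoc_mult_mat_vec[OF N MS v, symmetric])
      also have "\<dots> = N *\<^sub>v v" by (simp only: assoc_mult_mat[OF N M S, symmetric] NMS)
      finally have Nu: "N *\<^sub>v u = N *\<^sub>v v" .
      have "N *\<^sub>v (v - u) = N *\<^sub>v v - N *\<^sub>v u" by (rule mult_minus_distrib_mat_vec[OF N v u])
      thus ?thesis unfolding Nu using mult_mat_vec_carrier[OF N v] by simp
    qed
    hence "v - u \<in> mat_kernel N" using v u by (intro mat_kernelI[OF N]) simp_all
    moreover have "v = u + (v - u)" using u v by (intro eq_vecI) simp_all
    ultimately show ?thesis by blast
  qed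
  have "0\<^sub>v m \<in> mat_range M" using range_M[of "0\<^sub>v k"] mult_mat_vec_zero[OF M] by simp
  moreover have "0\<^sub>v m \<in> mat_kernel N" by (rule mat_kernelI[OF N zero_carrier_vec mult_mat_vec_zero[OF N]])
  ultimately have "mat_range M \<inter> mat_kernel N = {0\<^sub>v m}" using trivial by blast
  moreover have "{u + w |u w. u \<in> mat_range M \<and> w \<in> mat_kernel N} = carrier_vec m"
    using decomposition range kernel by (auto intro!: add_carrier_vec)
  ultimately show ?thesis unfolding direct_sum_full_def using range kernel by blast
qed

lemma crank_le_of_range_kernel_sum:
  assumes A: "A \<in> carrier_mat m n" and B: "B \<in> carrier_mat n m"
    and sum: "{u + w | u w. u \<in> mat_range (A * B) \<and> w \<in> mat_kernel B} = carrier_vec m"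
  shows "crank B \<le> crank (B * A * B)"
proof -
  interpret V: vec_space "TYPE(complex)" n .
  have BA: "B * A \<in> carrier_mat n n" using B A by (rule mult_carrier_mat)
  have BAB: "B * A * B \<in> carrier_mat n m" using BA B by (rule mult_carrier_mat)
  have "V.col_space B \<subseteq> V.col_space (B * A * B)"
  proof
    fix y assume "y \<in> V.col_space B"
    then obtain x where x: "x \<in> carrier_vec m" and y: "y = B *\<^sub>v x"
      unfolding V.col_space_eq[OF B] using B by auto
    then obtain u w where u: "u \<in> mat_range (A * B)" and w: "w \<in> mat_kernel B" and "x = u + w"
      using sum by blast
    from u obtain z where z: "z \<in> carrier_vec m" and uz: "u = A *\<^sub>v (B *\<^sub>v z)"
      using assoc_mult_mat_vec[OF A B] A B by (auto simp: mat_range_def)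
    have Bz: "B *\<^sub>v z \<in> carrier_vec n" using B z by (rule mult_mat_vec_carrier)
    have uc: "u \<in> carrier_vec m" using A Bz uz by simp
    from mat_kernelD[OF B w] have wc: "w \<in> carrier_vec m" and Bw: "B *\<^sub>v w = 0\<^sub>v n" .
    have "y = B *\<^sub>v u + B *\<^sub>v w"
      using y \<open>x = u + w\<close> mult_add_distrib_mat_vec[OF B uc wc] by simp
    also have "\<dots> = B *\<^sub>v (A *\<^sub>v (B *\<^sub>v z))" using B uc by (simp add: Bw uz)
    also have "\<dots> = (B * A * B) *\<^sub>v z"
      using assoc_mult_mat_vec[OF BA B z] assoc_mult_mat_vec[OF B A Bz] by simp
    finally show "y \<in> V.col_space (B * A * B)"
      unfolding V.col_space_eq[OF BAB] using BAB z y B x by auto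
  qed
  from V.rank_le_of_col_space_subset[OF B BAB this]
  show ?thesis using carrier_matD[OF B] by (simp add: crank_def)
qed

section \<open>Minkowski inverses\<close>

lemma assoc_mult_mat_dims:
  fixes A B C :: "'a::semiring_0 mat"
  assumes "dim_col A = dim_row B" and "dim_col B = dim_row C"
  shows "A * B * C = A * (B * C)"
proof -
  have B: "B \<in> carrier_mat (dim_col A) (dim_col B)" and C: "C \<in> carrier_mat (dim_col B) (dim_col C)"
    using assms by (auto intro!: carrier_matI)
  show ?thesis by (rule assoc_mult_mat[OF carrier_mat_triv B C])
qed

lemma minkowski_inverse_of_factorizations:
  assumes A: "A \<in> carrier_mat m n" and P: "P \<in> carrier_mat m n" and Q: "Q \<in> carrier_mat m n"
    and AP: "A = A * mink_adj A * P" and QA: "A = Q * mink_adj A * A"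
  shows "is_minkowski_inverse A (mink_adj P * A * mink_adj Q)"
proof -
  let ?B = "mink_adj A" and ?P = "mink_adj P" and ?Q = "mink_adj Q"
  let ?X = "?P * A * ?Q"
  note dims [simp] = carrier_matD[OF A] carrier_matD[OF P] carrier_matD[OF Q]
  note assoc = assoc_mult_mat_dims
  have PB: "?B = ?P * A * ?B"
    using arg_cong[OF AP, of mink_adj] by (simp add: mink_adj_mult assoc)
  have BQ: "?B = ?B * A * ?Q"
    using arg_cong[OF QA, of mink_adj] by (simp add: mink_adj_mult assoc)
  have PA: "?P * A = ?B * P"
  proof -
    have "?P * A = ?P * (A * ?B * P)" by (simp only: AP[symmetric])
    also have "\<dots> = (?P * A * ?B) * P" by (simp add: assoc)
    finally show ?thesis by (simp only: PB[symmetric])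
  qed
  have AQ: "A * ?Q = Q * ?B"
  proof -
    have "A * ?Q = (Q * ?B * A) * ?Q" by (simp only: QA[symmetric])
    also have "\<dots> = Q * (?B * A * ?Q)" by (simp add: assoc)
    finally show ?thesis by (simp only: BQ[symmetric])
  qed
  have AX: "A * ?X = A * ?Q"
  proof -
    have "A * ?X = A * (?P * A) * ?Q" by (simp add: assoc)
    also have "\<dots> = (A * ?B * P) * ?Q" by (simp add: PA assoc)
    finally show ?thesis by (simp only: AP[symmetric])
  qed
  have XA: "?X * A = ?P * A"
  proof -
    have "?X * A = ?P * (Q * ?B * A)" by (simp add: AQ[symmetric] assoc)
    thus ?thesis by (simp only: QA[symmetric])
  qed
  have "A * ?X * A = A"
    by (simp add: AX AQ) (simp add: assoc QA[symmetric])
  moreover have "?X * A * ?X = ?X"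
  proof -
    have "?X * A * ?X = ?P * A * (?P * A) * ?Q" by (simp only: XA) (simp add: assoc)
    also have "\<dots> = ?P * A * ?B * P * ?Q" by (simp add: PA assoc)
    also have "\<dots> = ?B * P * ?Q" by (simp only: PB[symmetric])
    also have "\<dots> = ?X" by (simp add: PA)
    finally show ?thesis .
  qed
  moreover have "mink_adj (A * ?X) = A * ?X"
    by (simp add: AX AQ mink_adj_mult)
  moreover have "mink_adj (?X * A) = ?X * A"
  proof -
    have "mink_adj (?X * A) = mink_adj (?P * A)" by (simp only: XA)
    also have "\<dots> = ?B * P" by (simp add: mink_adj_mult)
    finally show ?thesis by (simp only: XA) (simp only: PA)
  qed
  moreover have "?X \<in> carrier_mat n m"
    using mink_adj_carrier[OF P] A mink_adj_carrier[OF Q] by (intro mult_carrier_mat)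
  ultimately show ?thesis unfolding is_minkowski_inverse_def using A by simp
qed

lemma factorizations_of_minkowski_inverse:
  assumes A: "A \<in> carrier_mat m n" and inv: "is_minkowski_inverse A X"
  shows "A = A * mink_adj A * mink_adj X" and "A = mink_adj X * mink_adj A * A"
    and "mink_adj A = mink_adj A * mink_adj X * mink_adj A"
    and "A * X = mink_adj X * mink_adj A"
proof -
  have X: "X \<in> carrier_mat n m" and AXA: "A * X * A = A"
    and AX: "mink_adj (A * X) = A * X" and XA: "mink_adj (X * A) = X * A"
    using inv carrier_matD[OF A] unfolding is_minkowski_inverse_def by simp_all
  note dims [simp] = carrier_matD[OF A] carrier_matD[OF X]
  note assoc = assoc_mult_mat_dims
  have "A * X = mink_adj (A * X)" by (simp only: AX)
  also have "\<dots> = mink_adj X * mink_adj A" by (simp add: mink_adj_mult)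
  finally show AX': "A * X = mink_adj X * mink_adj A" .
  have "X * A = mink_adj (X * A)" by (simp only: XA)
  also have "\<dots> = mink_adj A * mink_adj X" by (simp add: mink_adj_mult)
  finally have XA': "X * A = mink_adj A * mink_adj X" .
  have "A = A * X * A" by (simp only: AXA)
  also have "\<dots> = A * (X * A)" by (simp add: assoc)
  also have "\<dots> = A * mink_adj A * mink_adj X" by (simp add: XA' assoc)
  finally show "A = A * mink_adj A * mink_adj X" .
  have "A = A * X * A" by (simp only: AXA)
  also have "\<dots> = mink_adj X * mink_adj A * A" by (simp only: AX')
  finally show "A = mink_adj X * mink_adj A * A" .
  have "mink_adj A = mink_adj (A * X * A)" by (simp only: AXA)
  also have "\<dots> = mink_adj A * mink_adj X * mink_adj A" by (simp add: mink_adj_mult assoc)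
  finally show "mink_adj A = mink_adj A * mink_adj X * mink_adj A" .
qed

lemma crank_le_of_minkowski_inverse:
  assumes A: "A \<in> carrier_mat m n" and inv: "is_minkowski_inverse A X"
  shows "crank A \<le> crank (A * mink_adj A)" and "crank A \<le> crank (mink_adj A * A)"
    and "crank A \<le> crank (mink_adj A * A * mink_adj A)"
proof -
  let ?B = "mink_adj A" and ?Y = "mink_adj X"
  have X: "X \<in> carrier_mat n m"
    using inv carrier_matD[OF A] unfolding is_minkowski_inverse_def by simp
  have B: "?B \<in> carrier_mat n m" using A by (rule mink_adj_carrier)
  have Y: "?Y \<in> carrier_mat m n" using X by (rule mink_adj_carrier)
  have AB: "A * ?B \<in> carrier_mat m m" using A B by (rule mult_carrier_mat)
  have BA: "?B * A \<in> carrier_mat n n" using B A by (rule mult_carrier_mat)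
  have BAB: "?B * A * ?B \<in> carrier_mat n m" using BA B by (rule mult_carrier_mat)
  note f = factorizations_of_minkowski_inverse[OF A inv]
  have "crank A = crank (A * ?B * ?Y)" using f(1) by (rule arg_cong)
  also have "\<dots> \<le> crank (A * ?B)" by (rule crank_mult_left_le[OF AB Y])
  finally show "crank A \<le> crank (A * ?B)" .
  have "crank A = crank (?Y * (?B * A))"
    by (simp only: assoc_mult_mat[OF Y B A, symmetric] f(2)[symmetric])
  also have "\<dots> \<le> crank (?B * A)" by (rule crank_mult_right_le[OF Y BA])
  finally show "crank A \<le> crank (?B * A)" .
  have "A = ?Y * ?B * (A * ?B * ?Y)" by (simp only: f(1)[symmetric] f(2)[symmetric])
  also have "\<dots> = ?Y * (?B * A * ?B) * ?Y"
    using carrier_matD[OF A] carrier_matD[OF X] by (simp add: assoc_mult_mat_dims)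
  finally have "crank A = crank (?Y * (?B * A * ?B) * ?Y)" by (rule arg_cong)
  also have "\<dots> \<le> crank (?Y * (?B * A * ?B))"
    by (rule crank_mult_left_le[OF mult_carrier_mat[OF Y BAB] Y])
  also have "\<dots> \<le> crank (?B * A * ?B)" by (rule crank_mult_right_le[OF Y BAB])
  finally show "crank A \<le> crank (?B * A * ?B)" .
qed

lemma minkowski_inverse_exists:
  assumes A: "A \<in> carrier_mat m n"
    and "crank A \<le> crank (A * mink_adj A)" and "crank A \<le> crank (mink_adj A * A)"
  shows "\<exists>X. is_minkowski_inverse A X"
proof -
  have B: "mink_adj A \<in> carrier_mat n m" using A by (rule mink_adj_carrier)
  obtain P where P: "P \<in> carrier_mat m n" and AP: "A = A * mink_adj A * P"
    using crank_mult_factor[OF A B assms(2)] by blast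
  have "crank (mink_adj A) \<le> crank (mink_adj A * A)" using assms(3) by simp
  then obtain R where R: "R \<in> carrier_mat n m" and BR: "mink_adj A = mink_adj A * A * R"
    using crank_mult_factor[OF B A] by blast
  have "A = mink_adj (mink_adj A * A * R)" by (simp only: BR[symmetric] mink_adj_mink_adj)
  also have "\<dots> = mink_adj R * mink_adj A * A"
    using carrier_matD[OF A] carrier_matD[OF R] by (simp add: mink_adj_mult assoc_mult_mat_dims)
  finally have "A = mink_adj R * mink_adj A * A" .
  with minkowski_inverse_of_factorizations[OF A P mink_adj_carrier[OF R] AP] show ?thesis by blast
qed

lemma direct_sum_of_minkowski_inverse:
  assumes A: "A \<in> carrier_mat m n" and inv: "is_minkowski_inverse A X"
  shows "direct_sum_full m (mat_image A (mat_range (mink_adj A))) (mat_kernel (mink_adj A))"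
proof -
  let ?B = "mink_adj A" and ?Y = "mink_adj X"
  have X: "X \<in> carrier_mat n m" and AXA: "A * X * A = A"
    using inv carrier_matD[OF A] unfolding is_minkowski_inverse_def by simp_all
  note dims [simp] = carrier_matD[OF A] carrier_matD[OF X]
  note assoc = assoc_mult_mat_dims
  note f = factorizations_of_minkowski_inverse[OF A inv]
  have B: "?B \<in> carrier_mat n m" using A by (rule mink_adj_carrier)
  have Y: "?Y \<in> carrier_mat m n" using X by (rule mink_adj_carrier)
  have AB: "A * ?B \<in> carrier_mat m m" using A B by (rule mult_carrier_mat)
  have YX: "?Y * X \<in> carrier_mat m m" using Y X by (rule mult_carrier_mat)
  have AX: "A * ?B * (?Y * X) = A * X"
  proof -
    have "A * ?B * (?Y * X) = A * ?B * ?Y * X" by (simp add: assoc)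
    thus ?thesis by (simp only: f(1)[symmetric])
  qed
  have "direct_sum_full m (mat_range (A * ?B)) (mat_kernel ?B)"
  proof (rule direct_sum_full_range_kernel)
    have "A * ?B * (?Y * X) * (A * ?B) = A * X * A * ?B" by (simp only: AX) (simp add: assoc)
    thus "A * ?B * (?Y * X) * (A * ?B) = A * ?B" by (simp only: AXA)
    have "?B * (A * ?B) * (?Y * X) = ?B * (A * ?B * (?Y * X))" by (simp add: assoc)
    also have "\<dots> = ?B * ?Y * ?B" by (simp only: AX f(4)) (simp add: assoc)
    finally show "?B * (A * ?B) * (?Y * X) = ?B" by (simp only: f(3)[symmetric])
    show "A * ?B * (?Y * X) = ?Y * ?B" by (simp only: AX f(4))
  qed (fact AB YX B Y)+
  thus ?thesis by (simp add: mat_image_mat_range_mult)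
qed

theorem theorem5p1:
  fixes A :: "complex mat" and m n :: nat
  assumes "A \<in> carrier_mat m n"
  shows "((\<exists>X. is_minkowski_inverse A X) \<longleftrightarrow>
            (crank (A * mink_adj A) = crank A \<and> crank (mink_adj A * A) = crank A))
       \<and> ((\<exists>X. is_minkowski_inverse A X) \<longleftrightarrow> crank (mink_adj A * A * mink_adj A) = crank A)
       \<and> ((\<exists>X. is_minkowski_inverse A X) \<longleftrightarrow>
            direct_sum_full m (mat_image A (mat_range (mink_adj A))) (mat_kernel (mink_adj A)))"
proof -
  let ?B = "mink_adj A" and ?I = "\<exists>X. is_minkowski_inverse A X"
  let ?D = "direct_sum_full m (mat_image A (mat_range ?B)) (mat_kernel ?B)"
  have B: "?B \<in> carrier_mat n m" using assms by (rule mink_adj_carrier)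
  have AB: "crank (A * ?B) \<le> crank A" by (rule crank_mult_left_le[OF assms B])
  have BA: "crank (?B * A) \<le> crank A" by (rule crank_mult_right_le[OF B assms])
  have BAB: "crank (?B * A * ?B) \<le> crank (?B * A)" "crank (?B * A * ?B) \<le> crank (A * ?B)"
    using crank_mult_left_le[OF mult_carrier_mat[OF B assms] B]
      crank_mult_right_le[OF B mult_carrier_mat[OF assms B]] assoc_mult_mat[OF B assms B] by simp_all
  have ranks: "crank (A * ?B) = crank A \<and> crank (?B * A) = crank A \<and> crank (?B * A * ?B) = crank A"
    if ?I
  proof -
    from that obtain X where "is_minkowski_inverse A X" ..
    note le = crank_le_of_minkowski_inverse[OF assms this]
    show ?thesis by (intro conjI order.antisym) (use le AB BA BAB in linarith)+
  qed
  have inverse: ?I if "crank A \<le> crank (A * ?B)" and "crank A \<le> crank (?B * A)"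
    using minkowski_inverse_exists[OF assms that] .
  have inverse_BAB: ?I if "crank A \<le> crank (?B * A * ?B)"
    by (rule inverse) (use that BAB in linarith)+
  have "crank A \<le> crank (?B * A * ?B)" if ?D
    using that crank_le_of_range_kernel_sum[OF assms B] mat_image_mat_range_mult[of A ?B] assms
    by (simp add: direct_sum_full_def)
  hence "?I \<longleftrightarrow> ?D" using inverse_BAB direct_sum_of_minkowski_inverse[OF assms] by blast
  moreover have "?I \<longleftrightarrow> crank (?B * A * ?B) = crank A" using ranks inverse_BAB by auto
  moreover have "?I \<longleftrightarrow> crank (A * ?B) = crank A \<and> crank (?B * A) = crank A"
    using ranks inverse by auto
  ultimately show ?thesis by blast
qed

end
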